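(* Let $p\ge 2$, $\alpha=p-1$, $0<R<\infty$, $\theta\ge\alpha$, $0\le\nu<\lambda_{\alpha,\theta}$. For each $\varepsilon\in(0,\mu_{\alpha,\theta})$ let $u_\varepsilon\in X^{1,p}_R(\alpha,\theta)\cap C^1[0,R]$ be a nonnegative function with $H_\nu(u_\varepsilon)=1$ and $\int_0^R e^{\mu_\varepsilon u_\varepsilon^{p/(p-1)}}\mathrm d\lambda_\theta=S_\varepsilon(p,\nu,\theta,R)$. Suppose that, along a sequence $\varepsilon\to0$, $u_\varepsilon\rightharpoonup u_0$ weakly in $X^{1,p}_R(\alpha,\theta)$, $u_\varepsilon\to u_0$ in $L^q_\theta$ for every $q>1$ and a.e. in $(0,R)$. If $u_0\equiv0$, then $(u_\varepsilon)$ concentrates at the origin: $H_\nu(u_\varepsilon)=1$, $u_\varepsilon\rightharpoonup0$ in $X^{1,p}_R(\alpha,\theta)$, and $$\lim_{\varepsilon\to0}\int_{r_0}^R|u_\varepsilon'|^p\,\mathrm d\lambda_\alpha=0\quad\text{for every }r_0>0.$$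
   Context: For $s\ge 0$ let $\omega_s=\frac{2\pi^{s/2}}{\Gamma(s/2)}$ and let $\mathrm d\lambda_s=\omega_s r^s\,\mathrm dr$ on $(0,R)$; $L^q_s=L^q((0,R),\mathrm d\lambda_s)$. The space $X^{1,p}_R(\alpha,\theta)$ is the completion of the set of all $u\in AC_{loc}(0,R)$ with $\lim_{r\to R}u(r)=0$, $u\in L^p_\theta$, $u'\in L^p_\alpha$, with respect to the norm $\|u\|=(\|u\|^p_{L^p_\theta}+\|u'\|^p_{L^p_\alpha})^{1/p}$. Set $\mu_{\alpha,\theta}=(\theta+1)\omega_\alpha^{1/\alpha}$, $\lambda_{\alpha,\theta}=\inf_{u\in X^{1,p}_R(\alpha,\theta)\setminus\{0\}}\|u'\|^p_{L^p_\alpha}/\|u\|^p_{L^p_\theta}$, and $H_\nu(u)=(\|u'\|^p_{L^p_\alpha}-\nu\|u\|^p_{L^p_\theta})^{1/p}$. Let $\mu_\varepsilon=\mu_{\alpha,\theta}-\varepsilon$ and $S_\varepsilon(p,\nu,\theta,R)=\sup_{u\in X^{1,p}_R(\alpha,\theta),\,H_\nu(u)\le1}\int_0^R e^{\mu_\varepsilon|u|^{p/(p-1)}}\mathrm d\lambda_\theta$. *)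

theory Defs
  imports "HOL-Analysis.Analysis"
begin

definition omega :: "real \<Rightarrow> real" where
  "omega s = 2 * pi powr (s / 2) / Gamma (s / 2)"

definition lam :: "real \<Rightarrow> real \<Rightarrow> real measure" where
  "lam R s = density (lebesgue_on {0<..<R}) (\<lambda>r. ennreal (omega s * r powr s))"

definition abs_cont_on :: "real \<Rightarrow> real \<Rightarrow> (real \<Rightarrow> real) \<Rightarrow> bool" where
  "abs_cont_on a b u \<longleftrightarrow>
     (\<forall>e>0. \<exists>d>0. \<forall>(n::nat) (c::nat \<Rightarrow> real) (d'::nat \<Rightarrow> real).
        (\<forall>i<n. a \<le> c i \<and> c i \<le> d' i \<and> d' i \<le> b) \<longrightarrow>
        (\<forall>i<n. \<forall>j<n. i \<noteq> j \<longrightarrow> d' i \<le> c j \<or> d' j \<le> c i) \<longrightarrow>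
        (\<Sum>i<n. d' i - c i) < d \<longrightarrow>
        (\<Sum>i<n. \<bar>u (d' i) - u (c i)\<bar>) < e)"

definition AC_loc :: "real \<Rightarrow> (real \<Rightarrow> real) \<Rightarrow> bool" where
  "AC_loc R u \<longleftrightarrow> (\<forall>a b. 0 < a \<and> a \<le> b \<and> b < R \<longrightarrow> abs_cont_on a b u)"

definition pnorm_pow :: "real measure \<Rightarrow> real \<Rightarrow> (real \<Rightarrow> real) \<Rightarrow> ennreal" where
  "pnorm_pow M p f = (\<integral>\<^sup>+ r. ennreal (\<bar>f r\<bar> powr p) \<partial>M)"

text \<open>The generating space: AC_loc functions vanishing at R with u in L^p_theta and u' in L^p_alpha.
  The a.e. derivative of u is taken as deriv u. X^{1,p}_R(alpha,theta) is the completion of this.\<close>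
definition X0 :: "real \<Rightarrow> real \<Rightarrow> real \<Rightarrow> real \<Rightarrow> (real \<Rightarrow> real) set" where
  "X0 p R alpha theta = {u. AC_loc R u \<and> (u \<longlongrightarrow> 0) (at_left R)
      \<and> pnorm_pow (lam R theta) p u < \<infinity> \<and> pnorm_pow (lam R alpha) p (deriv u) < \<infinity>}"

definition Xnorm :: "real \<Rightarrow> real \<Rightarrow> real \<Rightarrow> real \<Rightarrow> (real \<Rightarrow> real) \<Rightarrow> real" where
  "Xnorm p R alpha theta u =
     (enn2real (pnorm_pow (lam R theta) p u) + enn2real (pnorm_pow (lam R alpha) p (deriv u))) powr (1 / p)"

text \<open>Weak convergence in X^{1,p}_R(alpha,theta) of elements of the dense subspace X0:
  continuous linear functionals on the completion are exactly the bounded linear functionals on X0.\<close>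
definition weak_conv_X :: "real \<Rightarrow> real \<Rightarrow> real \<Rightarrow> real \<Rightarrow> (nat \<Rightarrow> real \<Rightarrow> real) \<Rightarrow> (real \<Rightarrow> real) \<Rightarrow> bool" where
  "weak_conv_X p R alpha theta u v \<longleftrightarrow>
     (\<forall>T :: (real \<Rightarrow> real) \<Rightarrow> real.
        (\<forall>f\<in>X0 p R alpha theta. \<forall>g\<in>X0 p R alpha theta. \<forall>a b. T (\<lambda>r. a * f r + b * g r) = a * T f + b * T g)
        \<and> (\<exists>C. \<forall>f\<in>X0 p R alpha theta. \<bar>T f\<bar> \<le> C * Xnorm p R alpha theta f)
        \<longrightarrow> (\<lambda>n. T (u n)) \<longlonglongrightarrow> T v)"

definition mu_const :: "real \<Rightarrow> real \<Rightarrow> real" where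
  "mu_const alpha theta = (theta + 1) * omega alpha powr (1 / alpha)"

definition lambda_const :: "real \<Rightarrow> real \<Rightarrow> real \<Rightarrow> real \<Rightarrow> real" where
  "lambda_const p R alpha theta =
     Inf ((\<lambda>u. enn2real (pnorm_pow (lam R alpha) p (deriv u)) / enn2real (pnorm_pow (lam R theta) p u))
          ` {u \<in> X0 p R alpha theta. enn2real (pnorm_pow (lam R theta) p u) \<noteq> 0})"

definition H :: "real \<Rightarrow> real \<Rightarrow> real \<Rightarrow> real \<Rightarrow> real \<Rightarrow> (real \<Rightarrow> real) \<Rightarrow> real" where
  "H p R alpha theta nu u =
     (enn2real (pnorm_pow (lam R alpha) p (deriv u)) - nu * enn2real (pnorm_pow (lam R theta) p u)) powr (1 / p)"

definition TM_integral :: "real \<Rightarrow> real \<Rightarrow> real \<Rightarrow> real \<Rightarrow> (real \<Rightarrow> real) \<Rightarrow> ennreal" where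
  "TM_integral p R theta mu u = (\<integral>\<^sup>+ r. ennreal (exp (mu * \<bar>u r\<bar> powr (p / (p - 1)))) \<partial>lam R theta)"

definition S_eps :: "real \<Rightarrow> real \<Rightarrow> real \<Rightarrow> real \<Rightarrow> real \<Rightarrow> real \<Rightarrow> ennreal" where
  "S_eps p R alpha theta nu eps =
     (SUP u \<in> {u \<in> X0 p R alpha theta. H p R alpha theta nu u \<le> 1}.
        TM_integral p R theta (mu_const alpha theta - eps) u)"

end

theory Submission
  imports Defs
begin

(* Suppose the energy of u n on (r0,R) stayed above some del > 0 along a subsequence. Since
   H(u n) = 1 and the L^p_theta-norms of u n tend to 0, the energy on every [a,b] inside (0,r0]
   is then eventually at most 1 - del/2, and the radial Hoelder estimate
     |u a| <= |u b| + (E / omega_alpha)^(1/p) * ln(b/a)^(1 - 1/p),   E the energy of u on [a,b],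
   bounds mu_eps |u n r|^(p/(p-1)) by C + beta ln(r0/r) with beta < theta + 1. So the
   Trudinger-Moser integrands are dominated by C' + (r0/r)^beta, which is integrable for
   lambda_theta, and dominated convergence (u n -> 0 a.e.) sends S_eps to lambda_theta(0,R).
   But S_eps is at least the integral of exp(mu/2 |u 0|^(p/(p-1))) for the fixed nonzero admissible
   function u 0, which strictly exceeds lambda_theta(0,R). Weak convergence to 0 is immediate,
   since u0 vanishes and so has norm zero. *)

lemma omega_pos: "s > 0 \<Longrightarrow> omega s > 0"
  unfolding omega_def by (intro divide_pos_pos mult_pos_pos Gamma_real_pos) auto

lemma omega_nonneg:
  assumes "s \<ge> 0" shows "omega s \<ge> 0"
proof (cases "s = 0")
  case False
  then show ?thesis using assms omega_pos[of s] by simp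
qed (simp add: omega_def)

lemma sets_lam [measurable_cong]: "sets (lam R s) = sets (lebesgue_on {0<..<R})"
  by (simp add: lam_def)

lemma space_lam: "space (lam R s) = {0<..<R}"
  by (simp add: lam_def)

lemma borel_measurable_ident_lebesgue_on [measurable]: "(\<lambda>x::real. x) \<in> borel_measurable (lebesgue_on {0<..<R})"
  by (rule continuous_imp_measurable_on_sets_lebesgue) (auto intro: continuous_intros)

lemma borel_measurable_lebesgue_on_if_continuous:
  fixes D g :: "real \<Rightarrow> real"
  assumes "continuous_on {0..R} D" and "\<And>x. x \<in> {0<..<R} \<Longrightarrow> g x = D x"
  shows "g \<in> borel_measurable (lebesgue_on {0<..<R})"
proof -
  have "continuous_on {0<..<R} D"
    by (rule continuous_on_subset[OF assms(1)]) auto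
  then have "D \<in> borel_measurable (lebesgue_on {0<..<R})"
    by (rule continuous_imp_measurable_on_sets_lebesgue) auto
  then show ?thesis
    using assms(2) measurable_cong[of "lebesgue_on {0<..<R}" g D] by simp
qed

lemma nn_integral_lam:
  assumes f: "f \<in> borel_measurable (lebesgue_on {0<..<R})"
  shows "(\<integral>\<^sup>+ x. f x \<partial>lam R s) =
         (\<integral>\<^sup>+ x. ennreal (omega s * x powr s) * f x * indicator {0<..<R} x \<partial>lebesgue)"
proof -
  have "continuous_on {0<..<R} (\<lambda>r. omega s * r powr s)"
    by (intro continuous_intros) auto
  then have "(\<lambda>r. omega s * r powr s) \<in> borel_measurable (lebesgue_on {0<..<R})"
    by (rule continuous_imp_measurable_on_sets_lebesgue) auto
  then have dens: "(\<lambda>r. ennreal (omega s * r powr s)) \<in> borel_measurable (lebesgue_on {0<..<R})"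
    by measurable
  show ?thesis
    unfolding lam_def
    by (subst nn_integral_density[OF dens f], subst nn_integral_restrict_space) auto
qed

definition energy_on :: "real \<Rightarrow> real \<Rightarrow> real set \<Rightarrow> (real \<Rightarrow> real) \<Rightarrow> ennreal" where
  "energy_on R p S u = (\<integral>\<^sup>+ r. ennreal (\<bar>deriv u r\<bar> powr p) * indicator S r \<partial>lam R (p - 1))"

lemma energy_on_le_pnorm_pow: "energy_on R p S u \<le> pnorm_pow (lam R (p - 1)) p (deriv u)"
  unfolding energy_on_def pnorm_pow_def
  by (intro nn_integral_mono) (auto simp: indicator_def)

lemma energy_on_add_le:
  assumes dm: "deriv u \<in> borel_measurable (lebesgue_on {0<..<R})" and b: "b \<le> r0"
  shows "energy_on R p {a..b} u + energy_on R p {r0<..<R} u \<le> pnorm_pow (lam R (p - 1)) p (deriv u)"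
proof -
  have m1: "(\<lambda>x. ennreal (\<bar>deriv u x\<bar> powr p) * indicator {a..b} x) \<in> borel_measurable (lam R (p - 1))"
    using dm by measurable
  have m2: "(\<lambda>x. ennreal (\<bar>deriv u x\<bar> powr p) * indicator {r0<..<R} x) \<in> borel_measurable (lam R (p - 1))"
    using dm by measurable
  have "energy_on R p {a..b} u + energy_on R p {r0<..<R} u
      = (\<integral>\<^sup>+ x. ennreal (\<bar>deriv u x\<bar> powr p) * indicator {a..b} x
               + ennreal (\<bar>deriv u x\<bar> powr p) * indicator {r0<..<R} x \<partial>lam R (p - 1))"
    unfolding energy_on_def by (rule nn_integral_add[OF m1 m2, symmetric])
  also have "\<dots> \<le> pnorm_pow (lam R (p - 1)) p (deriv u)"
    unfolding pnorm_pow_def using b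
    by (intro nn_integral_mono) (auto simp: indicator_def)
  finally show ?thesis .
qed

lemma deriv_eq_if_has_derivative_within_Icc:
  assumes "x \<in> {0<..<R}" and "\<forall>x\<in>{0..R}. (u has_real_derivative D x) (at x within {0..R})"
  shows "deriv u x = D x"
proof -
  have "x \<in> interior {0..R}" using assms(1) by simp
  then have "at x within {0..R} = at x" by (rule at_within_interior)
  moreover have "(u has_real_derivative D x) (at x within {0..R})" using assms by auto
  ultimately have "(u has_real_derivative D x) (at x)" by simp
  then show ?thesis by (rule DERIV_imp_deriv)
qed

lemma eq_0_at_right_endpoint:
  fixes u :: "real \<Rightarrow> real"
  assumes "0 < R" and "continuous (at R within {0..R}) u" and "(u \<longlongrightarrow> 0) (at_left R)"
  shows "u R = 0"
proof -
  have "(u \<longlongrightarrow> u R) (at_left R)"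
    using assms(2) at_within_Icc_at_left[OF assms(1)] by (simp add: continuous_within)
  from tendsto_unique[OF _ this assms(3)] show ?thesis by simp
qed

lemma pnorm_pow_eq_0_if_vanishing:
  assumes "\<forall>r\<in>{0<..<R}. v r = 0"
  shows "pnorm_pow (lam R s) p v = 0"
  unfolding pnorm_pow_def
  using assms by (subst nn_integral_cong[where v="\<lambda>_. 0"]) (auto simp: space_lam)

lemma deriv_eq_0_if_vanishing:
  fixes v :: "real \<Rightarrow> real"
  assumes "\<forall>r\<in>{0<..<R}. v r = 0"
  shows "\<forall>r\<in>{0<..<R}. deriv v r = 0"
proof
  fix r assume r: "r \<in> {0<..<R}"
  have "(v has_real_derivative 0) (at r)"
    by (rule has_field_derivative_transform_within_open[of "\<lambda>_. 0" _ _ "{0<..<R}"])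
       (use r assms in auto)
  then show "deriv v r = 0" by (rule DERIV_imp_deriv)
qed

lemma H_eq_0_if_vanishing:
  assumes "\<forall>r\<in>{0<..<R}. v r = 0"
  shows "H p R alpha theta nu v = 0"
  unfolding H_def
  using pnorm_pow_eq_0_if_vanishing[OF assms] pnorm_pow_eq_0_if_vanishing[OF deriv_eq_0_if_vanishing[OF assms]]
  by simp

lemma Xnorm_eq_0_if_vanishing:
  assumes "\<forall>r\<in>{0<..<R}. v r = 0"
  shows "Xnorm p R alpha theta v = 0"
  unfolding Xnorm_def
  using pnorm_pow_eq_0_if_vanishing[OF assms] pnorm_pow_eq_0_if_vanishing[OF deriv_eq_0_if_vanishing[OF assms]]
  by simp

lemma AC_loc_if_vanishing:
  assumes "\<forall>r\<in>{0<..<R}. v r = 0"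
  shows "AC_loc R v"
  unfolding AC_loc_def abs_cont_on_def
proof (intro allI impI)
  fix a b e :: real assume ab: "0 < a \<and> a \<le> b \<and> b < R" and e: "e > 0"
  show "\<exists>d>0. \<forall>(n::nat) (c::nat \<Rightarrow> real) (d'::nat \<Rightarrow> real).
      (\<forall>i<n. a \<le> c i \<and> c i \<le> d' i \<and> d' i \<le> b) \<longrightarrow>
      (\<forall>i<n. \<forall>j<n. i \<noteq> j \<longrightarrow> d' i \<le> c j \<or> d' j \<le> c i) \<longrightarrow>
      (\<Sum>i<n. d' i - c i) < d \<longrightarrow>
      (\<Sum>i<n. \<bar>v (d' i) - v (c i)\<bar>) < e"
  proof (intro exI[of _ 1] conjI allI impI)
    fix n :: nat and c d' :: "nat \<Rightarrow> real"
    assume "\<forall>i<n. a \<le> c i \<and> c i \<le> d' i \<and> d' i \<le> b"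
    then have "\<forall>i<n. c i \<in> {0<..<R} \<and> d' i \<in> {0<..<R}"
      using ab by auto
    then have "(\<Sum>i<n. \<bar>v (d' i) - v (c i)\<bar>) = 0"
      using assms by (intro sum.neutral) auto
    then show "(\<Sum>i<n. \<bar>v (d' i) - v (c i)\<bar>) < e" using e by simp
  qed simp
qed

lemma X0_if_vanishing:
  assumes "0 < R" and "\<forall>r\<in>{0<..<R}. v r = 0"
  shows "v \<in> X0 p R alpha theta"
proof -
  have "\<forall>\<^sub>F x in at_left R. v x = 0"
    using assms by (auto simp: eventually_at_left_field intro!: exI[of _ 0])
  then have "(v \<longlongrightarrow> 0) (at_left R)"
    by (rule tendsto_eventually)
  then show ?thesis
    unfolding X0_def
    using AC_loc_if_vanishing[OF assms(2)] pnorm_pow_eq_0_if_vanishing[OF assms(2)]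
      pnorm_pow_eq_0_if_vanishing[OF deriv_eq_0_if_vanishing[OF assms(2)]]
    by simp
qed

lemma weak_conv_X_to_0_if_limit_vanishes:
  assumes weak: "weak_conv_X p R alpha theta u u0"
    and R: "0 < R" and u0: "\<forall>r\<in>{0<..<R}. u0 r = 0"
  shows "weak_conv_X p R alpha theta u (\<lambda>r. 0)"
  unfolding weak_conv_X_def
proof (intro allI impI)
  fix T :: "(real \<Rightarrow> real) \<Rightarrow> real"
  assume T: "(\<forall>f\<in>X0 p R alpha theta. \<forall>g\<in>X0 p R alpha theta. \<forall>a b.
                T (\<lambda>r. a * f r + b * g r) = a * T f + b * T g)
           \<and> (\<exists>C. \<forall>f\<in>X0 p R alpha theta. \<bar>T f\<bar> \<le> C * Xnorm p R alpha theta f)"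
  then obtain C where C: "\<forall>f\<in>X0 p R alpha theta. \<bar>T f\<bar> \<le> C * Xnorm p R alpha theta f"
    by blast
  have T_vanishing: "T v = 0" if "\<forall>r\<in>{0<..<R}. v r = 0" for v
    using C X0_if_vanishing[OF R that] Xnorm_eq_0_if_vanishing[OF that] by force
  have "(\<lambda>n. T (u n)) \<longlonglongrightarrow> T u0"
    using weak T unfolding weak_conv_X_def by blast
  then show "(\<lambda>n. T (u n)) \<longlonglongrightarrow> T (\<lambda>r. 0)"
    using T_vanishing[OF u0] T_vanishing[of "\<lambda>r. 0"] by simp
qed

section \<open>A radial Hoelder estimate\<close>

lemma young_scaled:
  fixes p Y L s d :: real
  assumes p: "p > 1" and Y: "Y > 0" and L: "L > 0" and s: "s > 0" and d: "d \<ge> 0"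
  shows "d / (Y powr (1/p) * L powr (1 - 1/p))
          \<le> (d powr p * s powr (p-1)) / (p*Y) + 1 / ((p/(p-1)) * L * s)"
proof -
  define q where "q = p/(p-1)"
  have q1: "q > 1" using p by (simp add: q_def)
  have pq: "1/p + 1/q = 1" using p by (simp add: q_def field_simps)
  define x where "x = d * s powr ((p-1)/p) / Y powr (1/p)"
  define y where "y = s powr (-((p-1)/p)) / L powr (1 - 1/p)"
  have "x * y = d / (Y powr (1/p) * L powr (1 - 1/p))"
    using s by (simp add: x_def y_def powr_minus field_simps)
  moreover have "x powr p = d powr p * s powr (p-1) / Y"
    using p s Y d by (simp add: x_def powr_divide powr_mult powr_powr)
  moreover have "y powr q = 1 / (L * s)"
  proof -
    have "y powr q = (s powr (-((p-1)/p))) powr q / (L powr (1 - 1/p)) powr q"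
      by (simp add: y_def powr_divide)
    also have "\<dots> = s powr (-1) / L"
      using p L by (simp add: powr_powr q_def field_simps)
    finally show ?thesis using s L by (simp add: powr_minus field_simps)
  qed
  moreover have "x * y \<le> x powr p / p + y powr q / q"
    using d by (intro Youngs_inequality[OF p q1 pq]) (auto simp: x_def y_def)
  ultimately show ?thesis by (simp add: q_def field_simps)
qed

lemma has_integral_inverse_real:
  fixes a b :: real
  assumes "0 < a" "a \<le> b"
  shows "((\<lambda>s. 1 / s) has_integral (ln b - ln a)) {a..b}"
  using assms
  by (intro fundamental_theorem_of_calculus)
     (auto intro!: derivative_eq_intros
           simp: has_real_derivative_iff_has_vector_derivative[symmetric] field_simps)

text \<open>Hoelder's inequality for the weights s^(p-1) and 1/s, obtained by integrating
  the pointwise Young inequality with the optimal scaling.\<close>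
lemma integral_abs_le_log_weighted_bound:
  fixes p Y a b :: real and D :: "real \<Rightarrow> real"
  assumes p: "p > 1" and a: "0 < a" and ab: "a < b" and D: "continuous_on {a..b} D"
    and Y: "Y > 0" and hY: "integral {a..b} (\<lambda>s. \<bar>D s\<bar> powr p * s powr (p-1)) \<le> Y"
  shows "integral {a..b} (\<lambda>s. \<bar>D s\<bar>) \<le> Y powr (1/p) * ln (b/a) powr (1 - 1/p)"
proof -
  define L where "L = ln (b/a)"
  have L: "L > 0" and Lab: "ln b - ln a = L"
    using a ab by (simp_all add: L_def ln_div)
  define c where "c = Y powr (1/p) * L powr (1 - 1/p)"
  have c: "c > 0" using Y L by (simp add: c_def)
  define q where "q = p/(p-1)"
  define k1 where "k1 = 1/(p*Y)"
  define k2 where "k2 = 1/(q*L)"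
  have i1: "(\<lambda>s. \<bar>D s\<bar>) integrable_on {a..b}"
    by (intro integrable_continuous_interval continuous_intros D)
  have ih: "(\<lambda>s. \<bar>D s\<bar> powr p * s powr (p-1)) integrable_on {a..b}"
    using a p by (intro integrable_continuous_interval continuous_intros continuous_on_powr' D) auto
  have ii: "(\<lambda>s. 1 / s) integrable_on {a..b}"
    using has_integral_inverse_real[OF a less_imp_le[OF ab]] by (rule has_integral_integrable)
  have ih1: "(\<lambda>s. k1 * (\<bar>D s\<bar> powr p * s powr (p-1))) integrable_on {a..b}"
    using integrable_on_cmult_left[OF ih, of k1] by simp
  have ii1: "(\<lambda>s. k2 * (1 / s)) integrable_on {a..b}"
    using integrable_on_cmult_left[OF ii, of k2] by simp
  have "integral {a..b} (\<lambda>s. \<bar>D s\<bar> / c) \<le>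
        integral {a..b} (\<lambda>s. k1 * (\<bar>D s\<bar> powr p * s powr (p-1)) + k2 * (1 / s))"
  proof (rule integral_le)
    show "(\<lambda>s. \<bar>D s\<bar> / c) integrable_on {a..b}" using i1 by (rule integrable_on_divide)
    show "(\<lambda>s. k1 * (\<bar>D s\<bar> powr p * s powr (p-1)) + k2 * (1 / s)) integrable_on {a..b}"
      using ih1 ii1 by (rule integrable_add)
    fix s assume "s \<in> {a..b}"
    then have "s > 0" using a by auto
    from young_scaled[OF p Y L this, of "\<bar>D s\<bar>"]
    show "\<bar>D s\<bar> / c \<le> k1 * (\<bar>D s\<bar> powr p * s powr (p-1)) + k2 * (1 / s)"
      by (simp add: c_def q_def k1_def k2_def)
  qed
  also have "\<dots> = k1 * integral {a..b} (\<lambda>s. \<bar>D s\<bar> powr p * s powr (p-1)) + k2 * integral {a..b} (\<lambda>s. 1 / s)"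
    by (simp only: integral_add[OF ih1 ii1] integral_mult_right)
  also have "\<dots> = k1 * integral {a..b} (\<lambda>s. \<bar>D s\<bar> powr p * s powr (p-1)) + k2 * (ln b - ln a)"
    using integral_unique[OF has_integral_inverse_real[OF a less_imp_le[OF ab]]] by simp
  also have "\<dots> \<le> Y / (p*Y) + 1/q"
    using divide_right_mono[OF hY, of "p*Y"] p Y L Lab by (simp add: k1_def k2_def)
  also have "\<dots> = 1" using p Y by (simp add: q_def field_simps)
  finally have "integral {a..b} (\<lambda>s. \<bar>D s\<bar>) / c \<le> 1" by simp
  then show ?thesis using c by (simp add: c_def L_def field_simps)
qed

lemma omega_integral_le_nn_integral_lam:
  fixes D g :: "real \<Rightarrow> real"
  assumes a: "0 < a" and ab: "a < b" and bR: "b \<le> R" and D: "continuous_on {a..b} D"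
    and gD: "\<And>x. x \<in> {a<..<b} \<Longrightarrow> g x = D x"
    and gm: "g \<in> borel_measurable (lebesgue_on {0<..<R})"
    and s: "0 \<le> s" and p: "p > 0"
  shows "ennreal (omega s * integral {a..b} (\<lambda>x. \<bar>D x\<bar> powr p * x powr s))
         \<le> (\<integral>\<^sup>+ x. ennreal (\<bar>g x\<bar> powr p) * indicator {a..b} x \<partial>lam R s)"
proof -
  define h where "h = (\<lambda>x. \<bar>D x\<bar> powr p * x powr s)"
  have om: "0 \<le> omega s" using s by (rule omega_nonneg)
  have "continuous_on {a..b} h"
    unfolding h_def using a p by (intro continuous_intros continuous_on_powr' D) auto
  then have "(h has_integral integral {a..b} h) {a..b}"
    by (intro integrable_integral integrable_continuous_interval)
  then have "(h has_integral integral {a..b} h) {a<..<b}"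
    by (simp add: has_integral_Icc_iff_Ioo)
  then have "((\<lambda>x. omega s * h x) has_integral (omega s * integral {a..b} h)) {a<..<b}"
    by (rule has_integral_mult_right)
  moreover have "(\<lambda>x. indicator {a<..<b} x * (omega s * h x)) = (\<lambda>x. if x \<in> {a<..<b} then omega s * h x else 0)"
    by (auto simp: indicator_def)
  ultimately have hi: "((\<lambda>x. indicator {a<..<b} x * (omega s * h x)) has_integral (omega s * integral {a..b} h)) UNIV"
    using has_integral_restrict_UNIV[of "{a<..<b}" "\<lambda>x. omega s * h x"] by simp
  have nn: "\<And>x. 0 \<le> indicator {a<..<b} x * (omega s * h x)"
    using om by (simp add: h_def)
  have "ennreal (omega s * integral {a..b} h) =
        (\<integral>\<^sup>+ x. ennreal (indicator {a<..<b} x * (omega s * h x)) \<partial>lebesgue)"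
    using has_integral_iff_nn_integral_lebesgue[of "\<lambda>x. indicator {a<..<b} x * (omega s * h x)", OF nn] hi
    by simp
  also have "\<dots> \<le> (\<integral>\<^sup>+ x. ennreal (omega s * x powr s) * (ennreal (\<bar>g x\<bar> powr p) * indicator {a..b} x)
                          * indicator {0<..<R} x \<partial>lebesgue)"
  proof (rule nn_integral_mono)
    fix x
    show "ennreal (indicator {a<..<b} x * (omega s * h x))
        \<le> ennreal (omega s * x powr s) * (ennreal (\<bar>g x\<bar> powr p) * indicator {a..b} x) * indicator {0<..<R} x"
    proof (cases "x \<in> {a<..<b}")
      case True
      then have "x \<in> {a..b}" "x \<in> {0<..<R}" using a bR by auto
      then show ?thesis using True gD[OF True] om
        by (simp add: h_def ennreal_mult[symmetric] mult_ac)
    qed simp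
  qed
  also have "\<dots> = (\<integral>\<^sup>+ x. ennreal (\<bar>g x\<bar> powr p) * indicator {a..b} x \<partial>lam R s)"
    by (rule nn_integral_lam[symmetric]) (use gm in measurable)
  finally show ?thesis by (simp add: h_def)
qed

lemma abs_le_abs_plus_log_energy:
  fixes u D :: "real \<Rightarrow> real" and p R a b Y :: real
  assumes p: "p > 1" and a: "0 < a" and ab: "a < b" and bR: "b \<le> R"
    and Dc: "continuous_on {0..R} D"
    and uD: "\<forall>x\<in>{0..R}. (u has_real_derivative D x) (at x within {0..R})"
    and Y: "Y > 0" and energy: "energy_on R p {a..b} u \<le> ennreal Y"
  shows "\<bar>u a\<bar> \<le> \<bar>u b\<bar> + (Y / omega (p-1)) powr (1/p) * ln (b/a) powr (1 - 1/p)"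
proof -
  have sub: "{a..b} \<subseteq> {0..R}" using a bR by auto
  have Dab: "continuous_on {a..b} D" using continuous_on_subset[OF Dc sub] .
  have om: "omega (p-1) > 0" using p by (intro omega_pos) simp
  have gD: "\<And>x. x \<in> {0<..<R} \<Longrightarrow> deriv u x = D x"
    using deriv_eq_if_has_derivative_within_Icc uD by blast
  have gD': "\<And>x. x \<in> {a<..<b} \<Longrightarrow> deriv u x = D x"
    using gD a bR by auto
  have "ennreal (omega (p-1) * integral {a..b} (\<lambda>x. \<bar>D x\<bar> powr p * x powr (p-1))) \<le> energy_on R p {a..b} u"
    unfolding energy_on_def using p
    by (intro omega_integral_le_nn_integral_lam[OF a ab bR Dab gD' borel_measurable_lebesgue_on_if_continuous[OF Dc gD]]) auto
  also note energy
  finally have "ennreal (omega (p-1) * integral {a..b} (\<lambda>x. \<bar>D x\<bar> powr p * x powr (p-1))) \<le> ennreal Y" .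
  then have "integral {a..b} (\<lambda>x. \<bar>D x\<bar> powr p * x powr (p-1)) \<le> Y / omega (p-1)"
    using Y om by (simp add: ennreal_le_iff field_simps)
  then have bound: "integral {a..b} (\<lambda>s. \<bar>D s\<bar>) \<le> (Y / omega (p-1)) powr (1/p) * ln (b/a) powr (1 - 1/p)"
    using Y om by (intro integral_abs_le_log_weighted_bound[OF p a ab Dab]) auto
  have "(D has_integral (u b - u a)) {a..b}"
  proof (rule fundamental_theorem_of_calculus)
    show "a \<le> b" using ab by simp
    fix x assume "x \<in> {a..b}"
    then have "(u has_real_derivative D x) (at x within {0..R})"
      using uD sub by blast
    then have "(u has_real_derivative D x) (at x within {a..b})"
      using sub by (rule has_field_derivative_subset)
    then show "(u has_vector_derivative D x) (at x within {a..b})"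
      by (simp add: has_real_derivative_iff_has_vector_derivative)
  qed
  then have "\<bar>u b - u a\<bar> \<le> integral {a..b} (\<lambda>s. \<bar>D s\<bar>)"
    using integral_norm_bound_integral[of D "{a..b}" "\<lambda>s. \<bar>D s\<bar>"]
      integrable_continuous_interval[OF Dab] integrable_continuous_interval[of a b "\<lambda>s. \<bar>D s\<bar>"] Dab
    by (auto simp: integral_unique intro: continuous_intros)
  then show ?thesis using bound by linarith
qed

section \<open>Uniform exponential domination\<close>

lemma exp_powr_le_of_log_growth:
  fixes x K bb t m mu r0 r q :: real
  assumes q: "q > 0" and K: "K \<ge> 0" and bb: "bb \<ge> 0" and t: "t > 1"
    and m: "0 \<le> m" "m \<le> mu" and r: "0 < r" and r0: "0 < r0"
    and far: "r0 \<le> r \<Longrightarrow> \<bar>x\<bar> \<le> K"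
    and near: "r < r0 \<Longrightarrow> \<bar>x\<bar> \<le> K + bb * ln (r0/r) powr (1/q)"
  shows "exp (m * \<bar>x\<bar> powr q) \<le> exp (mu * (K*t/(t-1)) powr q)
           + r0 powr (mu * t powr q * bb powr q) * r powr (-(mu * t powr q * bb powr q))"
proof -
  define M where "M = K*t/(t-1)"
  define beta where "beta = mu * t powr q * bb powr q"
  have bounded: "exp (m * \<bar>x\<bar> powr q) \<le> exp (mu * M powr q)" if "\<bar>x\<bar> \<le> M"
  proof -
    have "\<bar>x\<bar> powr q \<le> M powr q" using that q by (intro powr_mono2) auto
    then have "m * \<bar>x\<bar> powr q \<le> mu * M powr q"
      using m by (intro mult_mono) auto
    then show ?thesis by simp
  qed
  have "exp (m * \<bar>x\<bar> powr q) \<le> exp (mu * M powr q) \<or>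
        exp (m * \<bar>x\<bar> powr q) \<le> r0 powr beta * r powr (-beta)"
  proof (cases "r0 \<le> r \<or> bb * ln (r0/r) powr (1/q) \<le> K/(t-1)")
    case True
    have "K \<le> M" and "K + K/(t-1) = M"
      using K t by (simp_all add: M_def field_simps)
    then have "\<bar>x\<bar> \<le> M"
      using True far near by (cases "r0 \<le> r") auto
    then show ?thesis using bounded by blast
  next
    case False
    define L where "L = ln (r0/r)"
    have L: "L > 0" using False r by (simp add: L_def)
    have "K < (t-1) * (bb * L powr (1/q))"
      using False t by (simp add: L_def field_simps)
    then have "\<bar>x\<bar> \<le> t * (bb * L powr (1/q))"
      using False near by (simp add: L_def algebra_simps)
    then have "\<bar>x\<bar> powr q \<le> (t * (bb * L powr (1/q))) powr q"
      using q by (intro powr_mono2) auto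
    also have "\<dots> = t powr q * bb powr q * L"
      using q t bb L by (simp add: powr_mult powr_powr)
    finally have "m * \<bar>x\<bar> powr q \<le> mu * (t powr q * bb powr q * L)"
      using m by (intro mult_mono) auto
    then have "exp (m * \<bar>x\<bar> powr q) \<le> exp (beta * L)"
      by (simp add: beta_def mult_ac)
    also have "\<dots> = (r0/r) powr beta"
      using r r0 by (simp add: powr_def L_def mult_ac)
    also have "\<dots> = r0 powr beta * r powr (-beta)"
      using r r0 by (simp add: powr_divide powr_minus_divide)
    finally show ?thesis by blast
  qed
  moreover have "0 \<le> exp (mu * M powr q)" and "0 \<le> r0 powr beta * r powr (-beta)"
    by simp_all
  ultimately show ?thesis
    unfolding M_def beta_def by linarith
qed

text \<open>Half of the gain 1 - del/2 < 1 is spent on a factor t > 1 that absorbs the bounded part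
  of u; the other half keeps the exponent of 1/r strictly below theta + 1.\<close>
lemma log_exponent_margin:
  fixes p om theta del :: real
  assumes p: "p > 1" and om: "om > 0" and th: "theta + 1 > 0" and d: "0 < del" "del \<le> 1"
  defines "\<kappa> \<equiv> (1 - del/2) powr (1/(p-1))"
  defines "q \<equiv> p/(p-1)"
  defines "t \<equiv> \<kappa> powr (-1/(2*q))"
  defines "bb \<equiv> ((1 - del/2)/om) powr (1/p)"
  shows "t > 1" and "(theta + 1) * om powr (1/(p-1)) * t powr q * bb powr q < theta + 1"
    and "0 \<le> (theta + 1) * om powr (1/(p-1)) * t powr q * bb powr q"
proof -
  have d1: "0 < 1 - del/2" "1 - del/2 < 1" using d by auto
  have q: "q > 0" using p by (simp add: q_def)
  have k0: "\<kappa> > 0" using d1 by (simp add: \<kappa>_def)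
  have k1: "\<kappa> < 1" unfolding \<kappa>_def using powr_less_mono2[of "1/(p-1)" "1 - del/2" 1] d1 p by simp
  show "t > 1" unfolding t_def using powr_less_mono2_neg[of "-1/(2*q)" \<kappa> 1] k0 k1 q by simp
  have tq: "t powr q = \<kappa> powr (-1/2)" unfolding t_def using k0 q by (simp add: powr_powr)
  have bq: "bb powr q = \<kappa> / om powr (1/(p-1))"
    unfolding bb_def \<kappa>_def using d1 om p by (simp add: powr_powr q_def powr_divide)
  have "(theta + 1) * om powr (1/(p-1)) * t powr q * bb powr q = (theta + 1) * (\<kappa> powr (-1/2) * \<kappa>)"
    using om by (simp add: tq bq)
  also have "\<kappa> powr (-1/2) * \<kappa> = \<kappa> powr (1/2)"
    using k0 powr_add[of \<kappa> "-1/2" 1] by simp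
  finally have eq: "(theta + 1) * om powr (1/(p-1)) * t powr q * bb powr q = (theta + 1) * \<kappa> powr (1/2)" .
  have "\<kappa> powr (1/2) < 1" using powr_less_mono2[of "1/2" \<kappa> 1] k0 k1 by simp
  then show "(theta + 1) * om powr (1/(p-1)) * t powr q * bb powr q < theta + 1"
    unfolding eq using th by simp
  show "0 \<le> (theta + 1) * om powr (1/(p-1)) * t powr q * bb powr q"
    unfolding eq using th by simp
qed

definition subcritical_near_origin :: "real \<Rightarrow> real \<Rightarrow> real \<Rightarrow> real \<Rightarrow> (real \<Rightarrow> real) \<Rightarrow> bool" where
  "subcritical_near_origin p R r0 del u \<longleftrightarrow>
     (\<exists>D. continuous_on {0..R} D \<and> (\<forall>x\<in>{0..R}. (u has_real_derivative D x) (at x within {0..R})))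
     \<and> u R = 0 \<and> pnorm_pow (lam R (p - 1)) p (deriv u) \<le> 2
     \<and> (\<forall>a b. 0 < a \<longrightarrow> a < b \<longrightarrow> b \<le> r0 \<longrightarrow> energy_on R p {a..b} u \<le> ennreal (1 - del / 2))"

lemma exp_powr_le_if_subcritical:
  fixes u :: "real \<Rightarrow> real" and p R r0 del mu m t :: real
  assumes p: "p > 1" and r0: "0 < r0" "r0 < R" and u: "subcritical_near_origin p R r0 del u"
    and d: "0 < del" "del \<le> 1" and m: "0 \<le> m" "m \<le> mu" and t: "t > 1"
  defines "K \<equiv> (2 / omega (p-1)) powr (1/p) * ln (R/r0) powr (1 - 1/p)"
  defines "bb \<equiv> ((1 - del/2) / omega (p-1)) powr (1/p)"
  defines "q \<equiv> p/(p-1)"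
  assumes r: "r \<in> {0<..<R}"
  shows "exp (m * \<bar>u r\<bar> powr q) \<le> exp (mu * (K*t/(t-1)) powr q)
           + r0 powr (mu * t powr q * bb powr q) * r powr (-(mu * t powr q * bb powr q))"
proof -
  obtain D where Dc: "continuous_on {0..R} D"
    and uD: "\<forall>x\<in>{0..R}. (u has_real_derivative D x) (at x within {0..R})"
    using u by (auto simp: subcritical_near_origin_def)
  have uR: "u R = 0" and total: "pnorm_pow (lam R (p-1)) p (deriv u) \<le> 2"
    and inner: "\<And>a b. 0 < a \<Longrightarrow> a < b \<Longrightarrow> b \<le> r0 \<Longrightarrow> energy_on R p {a..b} u \<le> ennreal (1 - del/2)"
    using u by (auto simp: subcritical_near_origin_def)
  have q: "q > 0" and q1: "1/q = 1 - 1/p" using p by (simp_all add: q_def field_simps)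
  have far: "\<bar>u y\<bar> \<le> K" if y: "r0 \<le> y" "y < R" for y
  proof -
    have "energy_on R p {y..R} u \<le> ennreal 2"
      using energy_on_le_pnorm_pow[of R p "{y..R}" u] total by simp
    then have "\<bar>u y\<bar> \<le> \<bar>u R\<bar> + (2 / omega (p-1)) powr (1/p) * ln (R/y) powr (1 - 1/p)"
      using y r0 by (intro abs_le_abs_plus_log_energy[OF p _ y(2) _ Dc uD]) auto
    also have "\<dots> \<le> K"
    proof -
      have "ln (R/y) \<le> ln (R/r0)" and "0 \<le> ln (R/y)"
        using y r0 by (simp_all add: divide_left_mono)
      then have "ln (R/y) powr (1 - 1/p) \<le> ln (R/r0) powr (1 - 1/p)"
        using p by (intro powr_mono2) auto
      then show ?thesis unfolding K_def using uR by (simp add: mult_left_mono)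
    qed
    finally show ?thesis .
  qed
  have near: "\<bar>u y\<bar> \<le> K + bb * ln (r0/y) powr (1/q)" if y: "0 < y" "y < r0" for y
  proof -
    have "\<bar>u y\<bar> \<le> \<bar>u r0\<bar> + ((1 - del/2) / omega (p-1)) powr (1/p) * ln (r0/y) powr (1 - 1/p)"
      using y r0 d by (intro abs_le_abs_plus_log_energy[OF p y(1) y(2) _ Dc uD _ inner]) auto
    then show ?thesis using far[of r0] r0 by (simp add: bb_def q1)
  qed
  show ?thesis
    using r far near unfolding K_def bb_def
    by (intro exp_powr_le_of_log_growth[OF q _ _ t m _ r0(1)]) auto
qed

lemma exp_powr_uniformly_dominated:
  fixes p theta R r0 del :: real
  assumes p: "p > 1" and th: "theta \<ge> 0" and r0: "0 < r0" "r0 < R" and d: "0 < del" "del \<le> 1"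
  obtains C beta where "C \<ge> 0" "0 \<le> beta" "beta < theta + 1"
    "\<And>u m r. subcritical_near_origin p R r0 del u \<Longrightarrow> 0 \<le> m \<Longrightarrow> m \<le> mu_const (p-1) theta \<Longrightarrow>
       r \<in> {0<..<R} \<Longrightarrow> exp (m * \<bar>u r\<bar> powr (p/(p-1))) \<le> C + r0 powr beta * r powr (-beta)"
proof -
  define mu where "mu = mu_const (p-1) theta"
  define q where "q = p/(p-1)"
  define t where "t = ((1 - del/2) powr (1/(p-1))) powr (-1/(2*q))"
  define bb where "bb = ((1 - del/2) / omega (p-1)) powr (1/p)"
  define K where "K = (2 / omega (p-1)) powr (1/p) * ln (R/r0) powr (1 - 1/p)"
  define beta where "beta = mu * t powr q * bb powr q"
  have om: "omega (p-1) > 0" using p by (intro omega_pos) simp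
  have t: "t > 1" and "beta < theta + 1" "0 \<le> beta"
    using log_exponent_margin[OF p om _ d, of theta] th
    unfolding t_def q_def beta_def mu_def mu_const_def bb_def by auto
  show ?thesis
  proof (rule that[of "exp (mu * (K*t/(t-1)) powr q)" beta])
    fix u m r
    assume "subcritical_near_origin p R r0 del u"
      and m: "0 \<le> m" "m \<le> mu_const (p-1) theta" and "r \<in> {0<..<R}"
    then show "exp (m * \<bar>u r\<bar> powr (p/(p-1))) \<le> exp (mu * (K*t/(t-1)) powr q) + r0 powr beta * r powr (-beta)"
      using exp_powr_le_if_subcritical[OF p r0 _ d m(1) m(2)[folded mu_def] t]
      unfolding K_def bb_def beta_def q_def by simp
  qed (use \<open>0 \<le> beta\<close> \<open>beta < theta + 1\<close> in auto)
qed

section \<open>Dominated convergence and the strict gap\<close>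

lemma nn_integral_lam_eq_has_integral:
  fixes f :: "real \<Rightarrow> real"
  assumes fc: "continuous_on {0<..<R} f" and nn: "\<And>r. r \<in> {0<..<R} \<Longrightarrow> 0 \<le> f r" and s: "0 \<le> s"
    and I: "((\<lambda>r. omega s * r powr s * f r) has_integral I) {0<..<R}"
  shows "(\<integral>\<^sup>+ r. ennreal (f r) \<partial>lam R s) = ennreal I"
proof -
  define g where "g x = indicator {0<..<R} x * (omega s * x powr s * f x)" for x
  have g_nonneg: "0 \<le> g x" for x
    using omega_nonneg[OF s] nn by (simp add: g_def indicator_def)
  have "g = (\<lambda>x. if x \<in> {0<..<R} then omega s * x powr s * f x else 0)"
    by (auto simp: g_def indicator_def)
  then have "(g has_integral I) UNIV"
    using has_integral_restrict_UNIV[of "{0<..<R}" "\<lambda>x. omega s * x powr s * f x"] I by simp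
  then have gI: "(\<integral>\<^sup>+ x. ennreal (g x) \<partial>lebesgue) = ennreal I"
    using has_integral_iff_nn_integral_lebesgue[of g, OF g_nonneg] by simp
  have "f \<in> borel_measurable (lebesgue_on {0<..<R})"
    by (rule continuous_imp_measurable_on_sets_lebesgue[OF fc]) auto
  then have "(\<lambda>x. ennreal (f x)) \<in> borel_measurable (lebesgue_on {0<..<R})"
    by measurable
  then have "(\<integral>\<^sup>+ r. ennreal (f r) \<partial>lam R s)
      = (\<integral>\<^sup>+ x. ennreal (omega s * x powr s) * ennreal (f x) * indicator {0<..<R} x \<partial>lebesgue)"
    by (rule nn_integral_lam)
  also have "\<dots> = (\<integral>\<^sup>+ x. ennreal (g x) \<partial>lebesgue)"
  proof (rule nn_integral_cong)
    fix x
    show "ennreal (omega s * x powr s) * ennreal (f x) * indicator {0<..<R} x = ennreal (g x)"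
      using omega_nonneg[OF s] nn[of x] by (cases "x \<in> {0<..<R}") (simp_all add: g_def ennreal_mult)
  qed
  finally show ?thesis using gI by simp
qed

lemma nn_integral_lam_singular_weight_finite:
  fixes theta beta C r0 R :: real
  assumes R: "0 < R" and th: "theta \<ge> 0" and beta: "0 \<le> beta" "beta < theta + 1" and C: "C \<ge> 0"
  shows "(\<integral>\<^sup>+ r. ennreal (C + r0 powr beta * r powr (-beta)) \<partial>lam R theta) < \<infinity>"
proof -
  have "(\<lambda>r. r powr theta) integrable_on {0..R}" "(\<lambda>r. r powr (theta - beta)) integrable_on {0..R}"
    using th beta R by (intro integrable_on_powr_from_0; simp)+
  then have "(\<lambda>r. omega theta * (C * r powr theta + r0 powr beta * r powr (theta - beta))) integrable_on {0..R}"
    by (intro integrable_on_mult_right integrable_add)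
  then have "(\<lambda>r. omega theta * r powr theta * (C + r0 powr beta * r powr (-beta))) integrable_on {0<..<R}"
    by (subst integrable_cong[where g="\<lambda>r. omega theta * (C * r powr theta + r0 powr beta * r powr (theta - beta))"])
       (auto simp: integrable_on_open_interval_real algebra_simps powr_add[symmetric])
  then obtain I where "((\<lambda>r. omega theta * r powr theta * (C + r0 powr beta * r powr (-beta))) has_integral I) {0<..<R}"
    by (auto simp: integrable_on_def)
  then have "(\<integral>\<^sup>+ r. ennreal (C + r0 powr beta * r powr (-beta)) \<partial>lam R theta) = ennreal I"
    using C th by (intro nn_integral_lam_eq_has_integral continuous_intros) auto
  then show ?thesis by simp
qed

lemma emeasure_lam_finite:
  assumes "0 < R" and "theta \<ge> 0"
  shows "emeasure (lam R theta) (space (lam R theta)) < \<infinity>"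
  using nn_integral_lam_singular_weight_finite[of R theta 0 1 0] assms by simp

lemma abs_ge_on_interval_if_nonzero:
  fixes u :: "real \<Rightarrow> real"
  assumes uc: "continuous_on {0..R} u" and x0: "x0 \<in> {0<..<R}" "u x0 \<noteq> 0"
  obtains a b where "0 < a" "a < b" "b < R" "\<And>y. y \<in> {a..b} \<Longrightarrow> \<bar>u x0\<bar> / 2 \<le> \<bar>u y\<bar>"
proof -
  have "x0 \<in> interior {0..R}" using x0 by simp
  then have "continuous (at x0) u" by (rule continuous_on_interior[OF uc])
  then have "\<forall>e>0. \<exists>d>0. \<forall>y. dist y x0 < d \<longrightarrow> dist (u y) (u x0) < e"
    by (simp only: continuous_at_eps_delta)
  moreover have "\<bar>u x0\<bar> / 2 > 0" using x0 by simp
  ultimately obtain \<rho> where \<rho>: "\<rho> > 0" and near': "\<forall>y. dist y x0 < \<rho> \<longrightarrow> dist (u y) (u x0) < \<bar>u x0\<bar> / 2"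
    by blast
  have near: "\<bar>u y - u x0\<bar> < \<bar>u x0\<bar> / 2" if "\<bar>y - x0\<bar> < \<rho>" for y
    using near' that by (simp add: dist_real_def)
  define \<sigma> where "\<sigma> = min \<rho> (min x0 (R - x0)) / 2"
  have "0 < min \<rho> (min x0 (R - x0))" "min \<rho> (min x0 (R - x0)) \<le> \<rho>"
    "min \<rho> (min x0 (R - x0)) \<le> x0" "min \<rho> (min x0 (R - x0)) \<le> R - x0"
    using \<rho> x0 by auto
  then have \<sigma>: "0 < \<sigma>" "\<sigma> < \<rho>" "\<sigma> < x0" "\<sigma> < R - x0"
    unfolding \<sigma>_def by linarith+
  show ?thesis
  proof (rule that[of "x0 - \<sigma>" "x0 + \<sigma>"])
    fix y assume "y \<in> {x0 - \<sigma>..x0 + \<sigma>}"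
    then have "\<bar>y - x0\<bar> < \<rho>" using \<sigma> by auto
    then have "\<bar>u y - u x0\<bar> < \<bar>u x0\<bar> / 2" by (rule near)
    then show "\<bar>u x0\<bar> / 2 \<le> \<bar>u y\<bar>" by linarith
  qed (use \<sigma> in linarith)+
qed

lemma nn_integral_lam_indicator_pos:
  assumes a: "0 < a" and ab: "a < b" and bR: "b \<le> R" and th: "theta > 0"
  shows "0 < (\<integral>\<^sup>+ x. indicator {a..b} x \<partial>lam R theta)"
proof -
  have "ennreal (omega theta * integral {a..b} (\<lambda>x. \<bar>1\<bar> powr 1 * x powr theta))
      \<le> (\<integral>\<^sup>+ x. ennreal (\<bar>1\<bar> powr 1) * indicator {a..b} x \<partial>lam R theta)"
    by (rule omega_integral_le_nn_integral_lam[of a b R "\<lambda>_. 1" "\<lambda>_. 1"]) (use a ab bR th in auto)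
  then have le: "ennreal (omega theta * integral {a..b} (\<lambda>x. x powr theta))
      \<le> (\<integral>\<^sup>+ x. indicator {a..b} x \<partial>lam R theta)"
    by simp
  have "integral {a..b} (\<lambda>x. a powr theta) \<le> integral {a..b} (\<lambda>x. x powr theta)"
  proof (rule integral_le)
    show "(\<lambda>x. x powr theta) integrable_on {a..b}"
      using a by (intro integrable_continuous_interval continuous_intros) auto
  qed (use a th in \<open>auto intro!: powr_mono2\<close>)
  then have "(b - a) * a powr theta \<le> integral {a..b} (\<lambda>x. x powr theta)"
    using ab by simp
  moreover have "0 < (b - a) * a powr theta"
    using a ab by simp
  ultimately have "0 < integral {a..b} (\<lambda>x. x powr theta)"
    by linarith
  then have "0 < ennreal (omega theta * integral {a..b} (\<lambda>x. x powr theta))"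
    using omega_pos[OF th] by simp
  then show ?thesis
    using le by (rule order_less_le_trans)
qed

lemma emeasure_lam_less_TM_integral:
  fixes u :: "real \<Rightarrow> real"
  assumes p: "p > 1" and R: "0 < R" and th: "theta > 0" and m: "m > 0"
    and uc: "continuous_on {0..R} u" and x0: "x0 \<in> {0<..<R}" "u x0 \<noteq> 0"
  shows "emeasure (lam R theta) (space (lam R theta)) < TM_integral p R theta m u"
proof -
  define q where "q = p/(p-1)"
  define V where "V = emeasure (lam R theta) (space (lam R theta))"
  obtain a b where ab: "0 < a" "a < b" "b < R" and ua: "\<And>y. y \<in> {a..b} \<Longrightarrow> \<bar>u x0\<bar> / 2 \<le> \<bar>u y\<bar>"
    using abs_ge_on_interval_if_nonzero[OF uc x0] by blast
  define k where "k = exp (m * (\<bar>u x0\<bar> / 2) powr q) - 1"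
  have k: "k > 0" using m x0 p by (simp add: k_def q_def)
  have "0 < ennreal k * (\<integral>\<^sup>+ x. indicator {a..b} x \<partial>lam R theta)"
    using k nn_integral_lam_indicator_pos[OF ab(1,2) _ th] ab(3) by (simp add: ennreal_zero_less_mult_iff)
  then have "V < V + ennreal k * (\<integral>\<^sup>+ x. indicator {a..b} x \<partial>lam R theta)"
    using emeasure_lam_finite[OF R less_imp_le[OF th]] ennreal_add_left_cancel_less[of V 0]
    by (simp add: V_def less_top)
  also have "\<dots> = (\<integral>\<^sup>+ x. 1 + ennreal k * indicator {a..b} x \<partial>lam R theta)"
    by (subst nn_integral_add) (auto simp: V_def nn_integral_cmult)
  also have "\<dots> \<le> TM_integral p R theta m u"
    unfolding TM_integral_def q_def[symmetric]
  proof (rule nn_integral_mono)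
    fix r
    show "1 + ennreal k * indicator {a..b} r \<le> ennreal (exp (m * \<bar>u r\<bar> powr q))"
    proof (cases "r \<in> {a..b}")
      case True
      then have "(\<bar>u x0\<bar> / 2) powr q \<le> \<bar>u r\<bar> powr q"
        using ua p by (intro powr_mono2) (auto simp: q_def)
      then have "ennreal (1 + k) \<le> ennreal (exp (m * \<bar>u r\<bar> powr q))"
        using m by (intro ennreal_leI) (simp add: k_def)
      then show ?thesis using True k by (simp add: ennreal_plus)
    qed (use m in simp)
  qed
  finally show ?thesis unfolding V_def .
qed

lemma TM_integral_tendsto_emeasure_lam:
  fixes v :: "nat \<Rightarrow> real \<Rightarrow> real" and m :: "nat \<Rightarrow> real"
  assumes p: "p > 1" and R: "0 < R" and th: "theta \<ge> 0"
    and beta: "0 \<le> beta" "beta < theta + 1" and C: "C \<ge> 0"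
    and meas: "\<And>n. v n \<in> borel_measurable (lebesgue_on {0<..<R})"
    and dom: "\<And>n r. r \<in> {0<..<R} \<Longrightarrow> exp (m n * \<bar>v n r\<bar> powr (p/(p-1))) \<le> C + r0 powr beta * r powr (-beta)"
    and m: "m \<longlonglongrightarrow> m'"
    and ae: "AE r in lam R theta. (\<lambda>n. v n r) \<longlonglongrightarrow> 0"
  shows "(\<lambda>n. TM_integral p R theta (m n) (v n)) \<longlonglongrightarrow> emeasure (lam R theta) (space (lam R theta))"
proof -
  define q where "q = p/(p-1)"
  have q: "q > 0" using p by (simp add: q_def)
  define w where "w r = C + r0 powr beta * r powr (-beta)" for r
  have "continuous_on {0<..<R} w" unfolding w_def by (intro continuous_intros) auto
  then have "w \<in> borel_measurable (lebesgue_on {0<..<R})"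
    by (rule continuous_imp_measurable_on_sets_lebesgue) auto
  then have wm: "(\<lambda>r. ennreal (w r)) \<in> borel_measurable (lam R theta)"
    by measurable
  have "(\<lambda>n. \<integral>\<^sup>+ r. ennreal (exp (m n * \<bar>v n r\<bar> powr q)) \<partial>lam R theta) \<longlonglongrightarrow> (\<integral>\<^sup>+ r. 1 \<partial>lam R theta)"
  proof (rule nn_integral_dominated_convergence[OF _ _ wm])
    show "(\<lambda>r. ennreal (exp (m n * \<bar>v n r\<bar> powr q))) \<in> borel_measurable (lam R theta)" for n
      using meas[of n] by measurable
    show "AE r in lam R theta. ennreal (exp (m n * \<bar>v n r\<bar> powr q)) \<le> ennreal (w r)" for n
      by (rule AE_I2) (auto simp: space_lam w_def q_def intro!: ennreal_leI dom)
    show "(\<integral>\<^sup>+ r. ennreal (w r) \<partial>lam R theta) < \<infinity>"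
      unfolding w_def by (rule nn_integral_lam_singular_weight_finite[OF R th beta C])
    show "AE r in lam R theta. (\<lambda>n. ennreal (exp (m n * \<bar>v n r\<bar> powr q))) \<longlonglongrightarrow> 1"
      using ae
    proof eventually_elim
      case (elim r)
      then have "(\<lambda>n. \<bar>v n r\<bar> powr q) \<longlonglongrightarrow> 0"
        using q by (intro tendsto_zero_powrI) (auto simp: tendsto_rabs_zero)
      then have "(\<lambda>n. m n * \<bar>v n r\<bar> powr q) \<longlonglongrightarrow> m' * 0"
        using m by (intro tendsto_mult)
      then have "(\<lambda>n. exp (m n * \<bar>v n r\<bar> powr q)) \<longlonglongrightarrow> exp 0"
        by (intro tendsto_exp) simp
      then have "(\<lambda>n. ennreal (exp (m n * \<bar>v n r\<bar> powr q))) \<longlonglongrightarrow> ennreal (exp 0)"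
        by (rule tendsto_ennrealI)
      then show ?case by simp
    qed
  qed simp
  then show ?thesis by (simp add: TM_integral_def q_def)
qed

lemma energy_le_of_H_eq_1:
  assumes p: "p > 0" and H: "H p R alpha theta nu u = 1"
  shows "enn2real (pnorm_pow (lam R alpha) p (deriv u)) \<le> 1 + nu * enn2real (pnorm_pow (lam R theta) p u)"
proof -
  define x where "x = enn2real (pnorm_pow (lam R alpha) p (deriv u)) - nu * enn2real (pnorm_pow (lam R theta) p u)"
  have Hx: "x powr (1/p) = 1" using H by (simp add: H_def x_def)
  have "x \<le> 1"
  proof (cases "x > 0")
    case True
    have "x = (x powr (1/p)) powr p" using True p by (simp add: powr_powr)
    then show ?thesis using Hx by simp
  qed simp
  then show ?thesis by (simp add: x_def)
qed

lemma subcritical_near_origin_if_tail_energy: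
  assumes p: "p > 1" and uX: "u \<in> X0 p R (p-1) theta"
    and uH: "H p R (p-1) theta nu u = 1"
    and Dc: "continuous_on {0..R} D"
    and uD: "\<forall>x\<in>{0..R}. (u has_real_derivative D x) (at x within {0..R})"
    and uR: "u R = 0"
    and d: "0 < del" "del \<le> 1"
    and small: "nu * enn2real (pnorm_pow (lam R theta) p u) < del/2"
    and tail: "ennreal del \<le> energy_on R p {r0<..<R} u"
  shows "subcritical_near_origin p R r0 del u"
  unfolding subcritical_near_origin_def
proof (intro conjI allI impI)
  show "\<exists>D. continuous_on {0..R} D \<and> (\<forall>x\<in>{0..R}. (u has_real_derivative D x) (at x within {0..R}))"
    using Dc uD by blast
  show "u R = 0" by (rule uR)
  have dm: "deriv u \<in> borel_measurable (lebesgue_on {0<..<R})"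
    using deriv_eq_if_has_derivative_within_Icc uD
    by (intro borel_measurable_lebesgue_on_if_continuous[OF Dc]) blast
  define A where "A = enn2real (pnorm_pow (lam R (p-1)) p (deriv u))"
  have A_eq: "pnorm_pow (lam R (p-1)) p (deriv u) = ennreal A"
    using uX by (simp add: X0_def A_def less_top ennreal_enn2real_if)
  have A: "A < 1 + del/2"
    using energy_le_of_H_eq_1[of p R "p-1" theta nu u] p uH small by (simp add: A_def)
  then have "A \<le> 2" using d by linarith
  then show "pnorm_pow (lam R (p-1)) p (deriv u) \<le> 2"
    unfolding A_eq by (metis ennreal_leI ennreal_numeral)
  fix a b :: real assume "0 < a" "a < b" and b: "b \<le> r0"
  define X where "X = energy_on R p {a..b} u"
  have "X + ennreal del \<le> X + energy_on R p {r0<..<R} u"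
    using tail by (rule add_left_mono)
  also have "\<dots> \<le> ennreal A"
    using energy_on_add_le[OF dm b, of p a] unfolding X_def A_eq .
  finally have XA: "X + ennreal del \<le> ennreal A" .
  then have "X \<noteq> \<infinity>"
    by (auto simp: top_unique)
  then obtain Xr where Xr: "X = ennreal Xr" "0 \<le> Xr"
    by (cases X) auto
  have "ennreal (Xr + del) \<le> ennreal A"
    using XA Xr d by (simp add: ennreal_plus)
  moreover have "0 \<le> A"
    by (simp add: A_def)
  ultimately have "Xr + del \<le> A"
    by (simp add: ennreal_le_iff)
  then show "X \<le> ennreal (1 - del/2)"
    using A Xr by (simp add: ennreal_leI)
qed

lemma ennreal_not_tendsto_0_obtain_subseq:
  fixes I :: "nat \<Rightarrow> ennreal"
  assumes "\<not> I \<longlonglongrightarrow> 0"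
  obtains del and \<phi> :: "nat \<Rightarrow> nat" where "0 < del" "del \<le> 1" "strict_mono \<phi>" "\<And>n. ennreal del \<le> I (\<phi> n)"
proof -
  have "\<exists>e>0. \<exists>\<^sub>F n in sequentially. e \<le> I n"
  proof (rule ccontr)
    assume "\<not> (\<exists>e>0. \<exists>\<^sub>F n in sequentially. e \<le> I n)"
    then have "\<forall>e>0. \<forall>\<^sub>F n in sequentially. I n < e"
      by (auto simp: not_frequently not_le) (metis not_less_zero)
    then have "I \<longlonglongrightarrow> 0"
      by (simp add: order_tendsto_iff)
    then show False
      using assms by simp
  qed
  then obtain e where e: "e > 0" and freq: "\<exists>\<^sub>F n in sequentially. e \<le> I n"
    by blast
  define del where "del = (if e = \<infinity> then 1 else min 1 (enn2real e))"
  have d: "0 < del" "del \<le> 1"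
    using e by (auto simp: del_def enn2real_positive_iff less_top)
  have de: "ennreal del \<le> e"
  proof (cases "e = \<infinity>")
    case False
    then have "ennreal del \<le> ennreal (enn2real e)" by (simp add: del_def)
    then show ?thesis using False by (simp add: ennreal_enn2real_if)
  qed (simp add: del_def)
  have "\<exists>\<^sub>F n in sequentially. ennreal del \<le> I n"
    using freq by (rule frequently_elim1) (use de in auto)
  then have "infinite {n. ennreal del \<le> I n}"
    by (simp add: frequently_cofinite[symmetric] cofinite_eq_sequentially)
  then obtain \<phi> :: "nat \<Rightarrow> nat" where \<phi>: "strict_mono \<phi>" "\<And>n. ennreal del \<le> I (\<phi> n)"
    using infinite_enumerate by blast
  show ?thesis by (rule that[OF d \<phi>])
qed

lemma TM_integral_le_S_eps:
  assumes "v \<in> X0 p R alpha theta" and "H p R alpha theta nu v \<le> 1" and "m \<le> mu_const alpha theta - eps"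
  shows "TM_integral p R theta m v \<le> S_eps p R alpha theta nu eps"
proof -
  have "TM_integral p R theta m v \<le> TM_integral p R theta (mu_const alpha theta - eps) v"
    unfolding TM_integral_def using assms(3)
    by (intro nn_integral_mono ennreal_leI exp_mono mult_right_mono) simp_all
  also have "\<dots> \<le> S_eps p R alpha theta nu eps"
    unfolding S_eps_def using assms(1,2) by (intro SUP_upper) simp
  finally show ?thesis .
qed

lemma TM_integral_tendsto_emeasure_if_subcritical:
  fixes v :: "nat \<Rightarrow> real \<Rightarrow> real" and m :: "nat \<Rightarrow> real"
  assumes p: "p > 1" and th: "theta \<ge> 0" and r0: "0 < r0" "r0 < R" and d: "0 < del" "del \<le> 1"
    and v: "\<And>n. subcritical_near_origin p R r0 del (v n)"
    and m: "\<And>n. 0 \<le> m n" "\<And>n. m n \<le> mu_const (p-1) theta" and m_lim: "m \<longlonglongrightarrow> m'"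
    and ae: "AE r in lam R theta. (\<lambda>n. v n r) \<longlonglongrightarrow> 0"
  shows "(\<lambda>n. TM_integral p R theta (m n) (v n)) \<longlonglongrightarrow> emeasure (lam R theta) (space (lam R theta))"
proof -
  obtain C beta where C: "C \<ge> 0" "0 \<le> beta" "beta < theta + 1"
    and dom: "\<And>u m r. subcritical_near_origin p R r0 del u \<Longrightarrow> 0 \<le> m \<Longrightarrow> m \<le> mu_const (p-1) theta \<Longrightarrow>
       r \<in> {0<..<R} \<Longrightarrow> exp (m * \<bar>u r\<bar> powr (p/(p-1))) \<le> C + r0 powr beta * r powr (-beta)"
    using exp_powr_uniformly_dominated[OF p th r0 d] by blast
  show ?thesis
  proof (rule TM_integral_tendsto_emeasure_lam[OF p _ th C(2,3) C(1) _ dom[OF v m(1) m(2)] m_lim ae])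
    show "0 < R" using r0 by simp
    fix n
    obtain D where "\<forall>x\<in>{0..R}. (v n has_real_derivative D x) (at x within {0..R})"
      using v[of n] by (auto simp: subcritical_near_origin_def)
    then have "continuous_on {0..R} (v n)"
      by (intro DERIV_continuous_on) auto
    then show "v n \<in> borel_measurable (lebesgue_on {0<..<R})"
      by (rule borel_measurable_lebesgue_on_if_continuous) simp
  qed
qed

lemma obtain_subcritical_subseq:
  fixes u D :: "nat \<Rightarrow> real \<Rightarrow> real" and eps :: "nat \<Rightarrow> real"
  assumes p: "p > 1" and uX: "\<And>n. u n \<in> X0 p R (p-1) theta"
    and uH: "\<And>n. H p R (p-1) theta nu (u n) = 1"
    and Dc: "\<And>n. continuous_on {0..R} (D n)"
    and uD: "\<And>n. \<forall>x\<in>{0..R}. (u n has_real_derivative D n x) (at x within {0..R})"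
    and uR: "\<And>n. u n R = 0"
    and Lp: "(\<lambda>n. pnorm_pow (lam R theta) p (u n)) \<longlonglongrightarrow> 0"
    and eps_lim: "eps \<longlonglongrightarrow> 0" and c: "c > 0"
    and tail: "\<not> (\<lambda>n. energy_on R p {r0<..<R} (u n)) \<longlonglongrightarrow> 0"
  obtains del and \<psi> :: "nat \<Rightarrow> nat" where "0 < del" "del \<le> 1" "strict_mono \<psi>"
    "\<And>n. subcritical_near_origin p R r0 del (u (\<psi> n))" "\<And>n. eps (\<psi> n) < c"
proof -
  obtain del and \<phi> :: "nat \<Rightarrow> nat" where d: "0 < del" "del \<le> 1" and \<phi>: "strict_mono \<phi>"
    and tail: "\<And>n. ennreal del \<le> energy_on R p {r0<..<R} (u (\<phi> n))"
    using ennreal_not_tendsto_0_obtain_subseq[OF tail] by blast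
  have "(\<lambda>n. nu * enn2real (pnorm_pow (lam R theta) p (u n))) \<longlonglongrightarrow> nu * enn2real 0"
    using Lp by (intro tendsto_mult tendsto_const tendsto_enn2real) auto
  then have "\<forall>\<^sub>F n in sequentially. nu * enn2real (pnorm_pow (lam R theta) p (u n)) < del/2 \<and> eps n < c"
    using d c eps_lim by (intro eventually_conj order_tendstoD(2)) auto
  then obtain N where N: "\<And>n. n \<ge> N \<Longrightarrow>
      nu * enn2real (pnorm_pow (lam R theta) p (u n)) < del/2 \<and> eps n < c"
    by (auto simp: eventually_sequentially)
  define \<psi> where "\<psi> n = \<phi> (n + N)" for n
  have small: "nu * enn2real (pnorm_pow (lam R theta) p (u (\<psi> n))) < del/2" "eps (\<psi> n) < c" for n
    using N[of "\<psi> n"] seq_suble[OF \<phi>, of "n + N"] by (auto simp: \<psi>_def)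
  show ?thesis
  proof (rule that[OF d])
    show "strict_mono \<psi>" using \<phi> by (simp add: strict_mono_def \<psi>_def)
    show "subcritical_near_origin p R r0 del (u (\<psi> n))" for n
      using tail[of "n + N"] unfolding \<psi>_def[symmetric]
      by (rule subcritical_near_origin_if_tail_energy[OF p uX uH Dc uD uR d small(1)])
  qed (rule small(2))
qed

lemma tail_energy_tendsto_0:
  fixes p R theta nu r0 :: real and eps :: "nat \<Rightarrow> real" and u :: "nat \<Rightarrow> real \<Rightarrow> real"
  assumes p: "p > 1" and R: "0 < R" and th: "theta > 0" and r0: "r0 > 0"
    and eps_range: "\<And>n. 0 < eps n \<and> eps n < mu_const (p-1) theta" and eps_lim: "eps \<longlonglongrightarrow> 0"
    and uX: "\<And>n. u n \<in> X0 p R (p-1) theta"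
    and uC1: "\<And>n. \<exists>D. continuous_on {0..R} D \<and>
                 (\<forall>x\<in>{0..R}. (u n has_real_derivative D x) (at x within {0..R}))"
    and uH: "\<And>n. H p R (p-1) theta nu (u n) = 1"
    and umax: "\<And>n. TM_integral p R theta (mu_const (p-1) theta - eps n) (u n)
                      = S_eps p R (p-1) theta nu (eps n)"
    and Lp: "(\<lambda>n. pnorm_pow (lam R theta) p (u n)) \<longlonglongrightarrow> 0"
    and ae: "AE r in lam R theta. (\<lambda>n. u n r) \<longlonglongrightarrow> 0"
  shows "(\<lambda>n. energy_on R p {r0<..<R} (u n)) \<longlonglongrightarrow> 0"
proof (cases "r0 < R")
  case False
  then have "{r0<..<R} = {}" by auto
  then show ?thesis by (simp add: energy_on_def)
next
  case r0R: True
  define mu where "mu = mu_const (p-1) theta"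
  have mu: "mu > 0"
    using p th omega_pos[of "p-1"] by (simp add: mu_def mu_const_def)
  obtain D where Dc: "\<And>n. continuous_on {0..R} (D n)"
    and uD: "\<And>n. \<forall>x\<in>{0..R}. (u n has_real_derivative D n x) (at x within {0..R})"
    using uC1 by metis
  have uc: "continuous_on {0..R} (u n)" for n
    using uD[of n] by (intro DERIV_continuous_on) auto
  have uR: "u n R = 0" for n
    using eq_0_at_right_endpoint[OF R] uc[of n] uX[of n] R
    by (simp add: X0_def continuous_on_eq_continuous_within)
  show ?thesis
  proof (rule ccontr)
    assume tail: "\<not> ?thesis"
    obtain del and \<psi> :: "nat \<Rightarrow> nat" where d: "0 < del" "del \<le> 1" and \<psi>: "strict_mono \<psi>"
      and sub: "\<And>n. subcritical_near_origin p R r0 del (u (\<psi> n))" and small: "\<And>n. eps (\<psi> n) < mu/2"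
      using obtain_subcritical_subseq[OF p uX uH Dc uD uR Lp eps_lim half_gt_zero[OF mu] tail] by blast
    have "(\<lambda>n. TM_integral p R theta (mu - eps (\<psi> n)) (u (\<psi> n)))
            \<longlonglongrightarrow> emeasure (lam R theta) (space (lam R theta))"
    proof (rule TM_integral_tendsto_emeasure_if_subcritical[OF p _ r0 r0R d sub])
      show "(\<lambda>n. mu - eps (\<psi> n)) \<longlonglongrightarrow> mu - 0"
        using LIMSEQ_subseq_LIMSEQ[OF eps_lim \<psi>] by (intro tendsto_diff) (auto simp: o_def)
      show "AE r in lam R theta. (\<lambda>n. u (\<psi> n) r) \<longlonglongrightarrow> 0"
        using ae by eventually_elim (use LIMSEQ_subseq_LIMSEQ[OF _ \<psi>] in \<open>auto simp: o_def\<close>)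
    qed (use th eps_range mu_def in \<open>auto simp: less_imp_le\<close>)
    moreover have "TM_integral p R theta (mu/2) (u 0) \<le> TM_integral p R theta (mu - eps (\<psi> n)) (u (\<psi> n))" for n
      using TM_integral_le_S_eps[OF uX[of 0], where nu=nu and m="mu/2" and eps="eps (\<psi> n)"]
        uH[of 0] umax[of "\<psi> n"] small[of n]
      by (simp add: mu_def)
    ultimately have "TM_integral p R theta (mu/2) (u 0) \<le> emeasure (lam R theta) (space (lam R theta))"
      by (intro tendsto_lowerbound) auto
    moreover have "\<not> (\<forall>r\<in>{0<..<R}. u 0 r = 0)"
      using H_eq_0_if_vanishing[of R "u 0" p "p-1" theta nu] uH[of 0] by auto
    then obtain x0 where "x0 \<in> {0<..<R}" "u 0 x0 \<noteq> 0"
      by blast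
    then have "emeasure (lam R theta) (space (lam R theta)) < TM_integral p R theta (mu/2) (u 0)"
      using mu by (intro emeasure_lam_less_TM_integral[OF p R th _ uc]) auto
    ultimately show False by simp
  qed
qed

theorem lemma3p2:
  fixes p alpha theta R nu :: real
    and eps :: "nat \<Rightarrow> real"
    and u :: "nat \<Rightarrow> real \<Rightarrow> real"
    and u0 :: "real \<Rightarrow> real"
  assumes "p \<ge> 2" and "alpha = p - 1" and "0 < R" and "theta \<ge> alpha"
    and "0 \<le> nu" and "nu < lambda_const p R alpha theta"
    and eps_range: "\<And>n. 0 < eps n \<and> eps n < mu_const alpha theta"
    and eps_lim: "eps \<longlonglongrightarrow> 0"
    and uX: "\<And>n. u n \<in> X0 p R alpha theta"
    and uC1: "\<And>n. \<exists>D. continuous_on {0..R} D \<and>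
                 (\<forall>x\<in>{0..R}. (u n has_real_derivative D x) (at x within {0..R}))"
    and unonneg: "\<And>n. \<forall>x\<in>{0..R}. u n x \<ge> 0"
    and uH: "\<And>n. H p R alpha theta nu (u n) = 1"
    and umax: "\<And>n. TM_integral p R theta (mu_const alpha theta - eps n) (u n)
                      = S_eps p R alpha theta nu (eps n)"
    and weak: "weak_conv_X p R alpha theta u u0"
    and Lq: "\<And>q. q > 1 \<Longrightarrow> (\<lambda>n. pnorm_pow (lam R theta) q (\<lambda>r. u n r - u0 r)) \<longlonglongrightarrow> 0"
    and ae: "AE r in lam R theta. (\<lambda>n. u n r) \<longlonglongrightarrow> u0 r"
    and u0_zero: "\<forall>r\<in>{0<..<R}. u0 r = 0"
  shows "(\<forall>n. H p R alpha theta nu (u n) = 1)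
       \<and> weak_conv_X p R alpha theta u (\<lambda>r. 0)
       \<and> (\<forall>r0>0. (\<lambda>n. \<integral>\<^sup>+ r. ennreal (\<bar>deriv (u n) r\<bar> powr p) * indicator {r0<..<R} r \<partial>lam R alpha)
                    \<longlonglongrightarrow> 0)"
proof (intro conjI allI impI)
  have p: "p > 1" and al: "alpha = p - 1" and th: "theta > 0"
    using assms(1,2,4) by simp_all
  show "H p R alpha theta nu (u n) = 1" for n
    by (rule uH)
  show "weak_conv_X p R alpha theta u (\<lambda>r. 0)"
    using weak assms(3) u0_zero by (rule weak_conv_X_to_0_if_limit_vanishes)
  fix r0 :: real assume r0: "r0 > 0"
  have "pnorm_pow (lam R theta) p (\<lambda>r. u n r - u0 r) = pnorm_pow (lam R theta) p (u n)" for n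
    unfolding pnorm_pow_def using u0_zero by (intro nn_integral_cong) (simp add: space_lam)
  then have Lp: "(\<lambda>n. pnorm_pow (lam R theta) p (u n)) \<longlonglongrightarrow> 0"
    using Lq[OF p] by simp
  have "AE r in lam R theta. (\<lambda>n. u n r) \<longlonglongrightarrow> 0"
    using ae AE_space by eventually_elim (simp add: space_lam u0_zero)
  from tail_energy_tendsto_0[OF p assms(3) th r0 eps_range[unfolded al] eps_lim uX[unfolded al]
      uC1 uH[unfolded al] umax[unfolded al] Lp this]
  show "(\<lambda>n. \<integral>\<^sup>+ r. ennreal (\<bar>deriv (u n) r\<bar> powr p) * indicator {r0<..<R} r \<partial>lam R alpha) \<longlonglongrightarrow> 0"
    by (simp add: energy_on_def al)
qed

end
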